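(* Let $G$ be a finite abelian group and $k$ a positive integer such that: (1) $|G| = k^2$ and $\exp(G)$ divides $k$; (2) $N \le G$ with $|N| = k$; (3) the product of all elements of $N$ is $1$; (4) the product of all elements of the quotient group $G/N$ is the identity coset $N$. Then for any listing $N = [n_1, \ldots, n_k]$ there is a complete set of left coset representatives $T = [t_1,\dots,t_k]$ of $N$ in $G$ such that the table of $G$ based on $N$ and $T$ is a pandiagonal magic Cayley-sudoku table.
   Context: All groups are finite and written multiplicatively with identity $1$; $\exp(G)$ is the exponent of $G$. A Cayley table of $G$ is a square array whose rows are labeled by a listing of all elements of $G$ and columns by a listing of all elements of $G$, the entry in row labeled $r$ and column labeled $c$ being $rc$; its body is the array of entries. A Cayley-sudoku table of $G$ is a Cayley table of $G$ whose body is partitioned into uniformly sized rectangular blocks (each block formed by a set of consecutive rows and consecutive columns) such that each element of $G$ appears exactly once in each block. In a $k\times k$ array, a broken diagonal is the list of entries in positions $(\ell, \ell + j)$, $\ell = 1, \ldots, k$, for fixed $j \in \{1, \ldots, k\}$, and a broken antidiagonal is the list of entries in positions $(\ell, j-\ell)$, $\ell=1,\dots,k$, for fixed $j$, indices mod $k$ with representatives in $\{1,\dots,k\}$. Row products are taken left to right; column, broken diagonal and broken antidiagonal products top to bottom. A Cayley-sudoku table is pandiagonal magic if its blocks are square and every row, column, broken diagonal and broken antidiagonal product of each block equals $1$. Given $N = [n_1, \ldots, n_k]$ and a complete set of left coset representatives $T = [t_1, \ldots, t_k]$ of $N$ in $G$, the table of $G$ based on $N$ and $T$ is the Cayley table of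 $G$ whose rows, top to bottom, are labeled $t_1 n_1, \ldots, t_k n_1, t_1 n_2, \ldots, t_k n_2, \ldots, t_1 n_k, \ldots, t_k n_k$ and whose columns, left to right, are labeled $n_1 t_1, \ldots, n_k t_1, n_1 t_2, \ldots, n_k t_2, \ldots, n_1 t_k, \ldots, n_k t_k$, with body partitioned into the $k^2$ blocks of size $k\times k$ given by rows $\{t_1 n_m,\dots,t_k n_m\}$ and columns $\{n_1 t_i,\dots,n_k t_i\}$, $1\le m,i\le k$. *)

theory Defs
  imports "HOL-Algebra.Algebra" "HOL-Algebra.Left_Coset"
begin

definition grp_exp :: "('a, 'b) monoid_scheme \<Rightarrow> nat" where
  "grp_exp G = Lcm (group.ord G ` carrier G)"

definition listing_of :: "'a list \<Rightarrow> 'a set \<Rightarrow> bool" where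
  "listing_of xs A \<longleftrightarrow> distinct xs \<and> set xs = A"

definition left_coset_reps :: "('a, 'b) monoid_scheme \<Rightarrow> 'a set \<Rightarrow> 'a list \<Rightarrow> bool" where
  "left_coset_reps G H ts \<longleftrightarrow> set ts \<subseteq> carrier G \<and>
     bij_betw (\<lambda>i. ts ! i <#\<^bsub>G\<^esub> H) {0..<length ts} (lcosets\<^bsub>G\<^esub> H)"

text \<open>A Cayley table given by row labels rl and column labels cl (0-based indices
  below K), each a listing of the carrier; entry (r,c) is rl r * cl c.\<close>
definition cayley_table :: "('a, 'b) monoid_scheme \<Rightarrow> (nat \<Rightarrow> 'a) \<Rightarrow> (nat \<Rightarrow> 'a) \<Rightarrow> nat \<Rightarrow> bool" where
  "cayley_table G rl cl K \<longleftrightarrow> K = card (carrier G) \<and>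
     bij_betw rl {0..<K} (carrier G) \<and> bij_betw cl {0..<K} (carrier G)"

definition block_entry :: "('a, 'b) monoid_scheme \<Rightarrow> (nat \<Rightarrow> 'a) \<Rightarrow> (nat \<Rightarrow> 'a) \<Rightarrow> nat \<Rightarrow> nat \<Rightarrow> nat \<Rightarrow> nat \<Rightarrow> nat \<Rightarrow> nat \<Rightarrow> 'a" where
  "block_entry G rl cl p q a b x y = rl (a * p + x) \<otimes>\<^bsub>G\<^esub> cl (b * q + y)"

definition cayley_sudoku :: "('a, 'b) monoid_scheme \<Rightarrow> (nat \<Rightarrow> 'a) \<Rightarrow> (nat \<Rightarrow> 'a) \<Rightarrow> nat \<Rightarrow> nat \<Rightarrow> nat \<Rightarrow> bool" where
  "cayley_sudoku G rl cl K p q \<longleftrightarrow> cayley_table G rl cl K \<and> 0 < p \<and> 0 < q \<and>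
     p dvd K \<and> q dvd K \<and>
     (\<forall>a < K div p. \<forall>b < K div q.
        bij_betw (\<lambda>(x, y). block_entry G rl cl p q a b x y) ({0..<p} \<times> {0..<q}) (carrier G))"

text \<open>Pandiagonal magic: square blocks (p = q) and every row, column, broken diagonal
  and broken antidiagonal product of each block equals 1 (abelian setting, so the
  order of multiplication is immaterial; finprod is used).\<close>
definition pandiagonal_magic :: "('a, 'b) monoid_scheme \<Rightarrow> (nat \<Rightarrow> 'a) \<Rightarrow> (nat \<Rightarrow> 'a) \<Rightarrow> nat \<Rightarrow> nat \<Rightarrow> bool" where
  "pandiagonal_magic G rl cl K p \<longleftrightarrow> cayley_sudoku G rl cl K p p \<and>
     (\<forall>a < K div p. \<forall>b < K div p.
        (\<forall>x < p. finprod G (\<lambda>y. block_entry G rl cl p p a b x y) {0..<p} = \<one>\<^bsub>G\<^esub>) \<and>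
        (\<forall>y < p. finprod G (\<lambda>x. block_entry G rl cl p p a b x y) {0..<p} = \<one>\<^bsub>G\<^esub>) \<and>
        (\<forall>j < p. finprod G (\<lambda>l. block_entry G rl cl p p a b l ((l + j) mod p)) {0..<p} = \<one>\<^bsub>G\<^esub>) \<and>
        (\<forall>j < p. finprod G (\<lambda>l. block_entry G rl cl p p a b l ((j + p - l) mod p)) {0..<p} = \<one>\<^bsub>G\<^esub>))"

definition based_row :: "('a, 'b) monoid_scheme \<Rightarrow> 'a list \<Rightarrow> 'a list \<Rightarrow> nat \<Rightarrow> 'a" where
  "based_row G ns ts r = ts ! (r mod length ts) \<otimes>\<^bsub>G\<^esub> ns ! (r div length ts)"

definition based_col :: "('a, 'b) monoid_scheme \<Rightarrow> 'a list \<Rightarrow> 'a list \<Rightarrow> nat \<Rightarrow> 'a" where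
  "based_col G ns ts c = ns ! (c mod length ns) \<otimes>\<^bsub>G\<^esub> ts ! (c div length ns)"

end

theory Submission
  imports Defs
begin

(*
  In an abelian group the entry of block (a, b) of the table based on N and T at local
  position (x, y) is (n_a t_b)(t_x n_y), and (x, y) \<mapsto> t_x n_y is a bijection onto G
  (coset decomposition), so every block is a translate of it.  Along a row, column or
  broken (anti)diagonal of a block, x is either constant or runs through all indices,
  and y is either constant or a permutation of all indices; the product is therefore
  (n_a t_b)^k \<cdot> P \<cdot> Q with P \<in> {t_x^k, \<Prod>T} and Q \<in> {n_y^k, \<Prod>N}, which is 1
  because exp G divides k and \<Prod>N = 1, provided T is chosen with \<Prod>T = 1.  Such a T
  exists because the product of any transversal lies in N, the product of all cosets
  being N.
*)

lemma nat_mod_eq_imp_eq: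
  fixes a b k :: nat
  assumes "a < b + k" "b < a + k" "a mod k = b mod k"
  shows "a = b"
proof -
  have "a = b" if "a \<le> b" "b < a + k" "a mod k = b mod k" for a b :: nat
  proof -
    have "k dvd b - a" using that mod_eq_dvd_iff_nat by metis
    moreover have "b - a < k" using that by linarith
    ultimately show ?thesis using that(1) by (metis dvd_imp_le le_antisym not_le zero_less_diff)
  qed
  from this[of a b] this[of b a] assms show ?thesis by (metis le_cases)
qed

lemma inj_on_add_mod: "inj_on (\<lambda>l. (l + j) mod k) {0..<k::nat}"
proof (rule inj_onI)
  fix x y assume "x \<in> {0..<k}" "y \<in> {0..<k}" and "(x + j) mod k = (y + j) mod k"
  then have "x + j < y + j + k" "y + j < x + j + k" by auto
  then have "x + j = y + j" using \<open>(x + j) mod k = (y + j) mod k\<close> by (rule nat_mod_eq_imp_eq)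
  then show "x = y" by simp
qed

lemma inj_on_diff_mod:
  assumes "j < (k::nat)"
  shows "inj_on (\<lambda>l. (j + k - l) mod k) {0..<k}"
proof (rule inj_onI)
  fix x y assume "x \<in> {0..<k}" "y \<in> {0..<k}" and eq: "(j + k - x) mod k = (j + k - y) mod k"
  then have "j + k - x < j + k - y + k" "j + k - y < j + k - x + k" by auto
  then have "j + k - x = j + k - y" using eq by (rule nat_mod_eq_imp_eq)
  with \<open>x \<in> {0..<k}\<close> \<open>y \<in> {0..<k}\<close> show "x = y" by auto
qed

lemma bij_betw_div_mod: "bij_betw (\<lambda>r. (r div k, r mod k)) {0..<m * k} ({0..<m} \<times> {0..<k::nat})"
proof (rule bij_betwI[where g = "\<lambda>(q, r). q * k + r"])
  show "(\<lambda>r. (r div k, r mod k)) \<in> {0..<m * k} \<rightarrow> {0..<m} \<times> {0..<k}"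
    by (cases "k = 0") (auto simp: less_mult_imp_div_less)
  show "(\<lambda>(q, r). q * k + r) \<in> {0..<m} \<times> {0..<k} \<rightarrow> {0..<m * k}"
  proof clarsimp
    fix q r assume "q < m" "r < k"
    then have "q * k + r < (q + 1) * k" by simp
    also have "\<dots> \<le> m * k" using \<open>q < m\<close> by (intro mult_right_mono) auto
    finally show "q * k + r < m * k" .
  qed
qed auto

lemma bij_betw_mod_div: "bij_betw (\<lambda>r. (r mod k, r div k)) {0..<m * k} ({0..<k} \<times> {0..<m::nat})"
proof -
  have "bij_betw prod.swap ({0..<m} \<times> {0..<k}) ({0..<k} \<times> {0..<m})"
    by (rule bij_betwI[where g = prod.swap]) auto
  from bij_betw_trans[OF bij_betw_div_mod this] show ?thesis by (simp add: comp_def)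
qed

lemma hom_finprod:
  assumes "comm_group G" "comm_group H" "h \<in> hom G H" "finite A" "f \<in> A \<rightarrow> carrier G"
  shows "h (finprod G f A) = finprod H (h \<circ> f) A"
proof -
  interpret G: comm_group G by (fact assms(1))
  interpret H: comm_group H by (fact assms(2))
  interpret group_hom G H h
    using assms(3) by (simp add: group_hom_def group_hom_axioms_def G.group_axioms H.group_axioms)
  show ?thesis using assms(4,5)
  proof (induction A rule: finite_induct)
    case (insert a A)
    then show ?case by (simp add: Pi_iff)
  qed simp
qed

lemma (in group) pow_eq_one_if_exp_dvd:
  assumes "grp_exp G dvd k" "x \<in> carrier G"
  shows "x [^] k = \<one>"
proof -
  have "ord x dvd grp_exp G" unfolding grp_exp_def using assms(2) by (intro dvd_Lcm) auto
  with assms show ?thesis by (simp add: pow_eq_id dvd_trans)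
qed

lemma (in comm_monoid) finprod_reindex_endo:
  assumes "finite A" "inj_on \<sigma> A" "\<sigma> ` A \<subseteq> A" "f \<in> A \<rightarrow> carrier G"
  shows "finprod G (\<lambda>x. f (\<sigma> x)) A = finprod G f A"
proof -
  have "\<sigma> ` A = A" using endo_inj_surj assms(1-3) by blast
  then show ?thesis using finprod_reindex[of f \<sigma> A] assms(2,4) by simp
qed

lemma (in comm_monoid) finprod_listing:
  assumes "listing_of xs A" "A \<subseteq> carrier G"
  shows "finprod G ((!) xs) {0..<length xs} = finprod G (\<lambda>x. x) A"
proof -
  have "A = (!) xs ` {0..<length xs}" "inj_on ((!) xs) {0..<length xs}"
    using assms(1) unfolding listing_of_def by (auto simp: in_set_conv_nth inj_on_nth)
  moreover have "finprod G (\<lambda>x. x) ((!) xs ` {0..<length xs}) = finprod G ((!) xs) {0..<length xs}"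
    using calculation assms(2) by (intro finprod_reindex) auto
  ultimately show ?thesis by simp
qed

lemma (in comm_monoid) finprod_mult_const:
  assumes "finite A" "c \<in> carrier G" "f \<in> A \<rightarrow> carrier G" "g \<in> A \<rightarrow> carrier G"
  shows "finprod G (\<lambda>l. c \<otimes> (f l \<otimes> g l)) A = c [^] card A \<otimes> (finprod G f A \<otimes> finprod G g A)"
  using assms by (simp add: finprod_multf finprod_const Pi_iff)

lemma (in group) obtain_rcoset_reps:
  assumes "finite (rcosets H)"
  obtains r where "r \<in> {0..<card (rcosets H)} \<rightarrow> carrier G"
    and "bij_betw (\<lambda>i. H #> r i) {0..<card (rcosets H)} (rcosets H)"
proof -
  obtain f where f: "bij_betw f {0..<card (rcosets H)} (rcosets H)"
    using ex_bij_betw_nat_finite[OF assms] by blast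
  have "\<exists>a \<in> carrier G. f i = H #> a" if "i < card (rcosets H)" for i
    using bij_betw_apply[OF f] that unfolding RCOSETS_def by auto
  then obtain r where r: "\<And>i. i < card (rcosets H) \<Longrightarrow> r i \<in> carrier G \<and> f i = H #> r i"
    by metis
  show ?thesis
  proof
    show "r \<in> {0..<card (rcosets H)} \<rightarrow> carrier G" using r by auto
    show "bij_betw (\<lambda>i. H #> r i) {0..<card (rcosets H)} (rcosets H)"
      using f by (rule bij_betw_cong[THEN iffD1, rotated]) (use r in auto)
  qed
qed

lemma (in comm_group) rcos_mult_mem:
  assumes "subgroup N G" "n \<in> N" "t \<in> carrier G"
  shows "N #> (t \<otimes> n) = N #> t"
proof -
  have "n \<in> carrier G" using assms(1,2) by (rule subgroup.mem_carrier)
  then have "t \<otimes> n = n \<otimes> t" using assms(3) by (simp add: m_comm)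
  also have "\<dots> \<in> N #> t" using assms(2) subgroup.subset[OF assms(1)] assms(3) by (rule rcosI)
  finally have "N #> t = N #> (t \<otimes> n)" using assms(3,1) by (rule repr_independence)
  then show ?thesis by (rule sym)
qed

lemma (in comm_group) finprod_rcoset_reps_mem:
  assumes "subgroup N G" "finite A" "r \<in> A \<rightarrow> carrier G"
    and "bij_betw (\<lambda>i. N #> r i) A (rcosets N)"
    and "finprod (G Mod N) (\<lambda>C. C) (carrier (G Mod N)) = \<one>\<^bsub>G Mod N\<^esub>"
  shows "finprod G r A \<in> N"
proof -
  interpret normal N G using assms(1) subgroup_imp_normal by blast
  interpret Q: comm_group "G Mod N" using abelian_FactGroup[OF assms(1)] .
  have "N #> finprod G r A = finprod (G Mod N) ((#>) N \<circ> r) A"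
    using hom_finprod[OF comm_group_axioms Q.comm_group_axioms r_coset_hom_Mod assms(2,3)] .
  also have "\<dots> = finprod (G Mod N) (\<lambda>C. C) ((\<lambda>i. N #> r i) ` A)"
    using assms(4) by (subst Q.finprod_reindex) (auto simp: bij_betw_def FactGroup_def comp_def)
  also have "\<dots> = N"
    using assms(4,5) by (simp add: bij_betw_def FactGroup_def)
  finally show ?thesis using coset_join1 assms(1,3) finprod_closed by blast
qed

lemma (in comm_group) obtain_rcoset_reps_finprod_one:
  assumes "subgroup N G" "finite (rcosets N)"
    and "finprod (G Mod N) (\<lambda>C. C) (carrier (G Mod N)) = \<one>\<^bsub>G Mod N\<^esub>"
  obtains ts where "length ts = card (rcosets N)" "set ts \<subseteq> carrier G"
    and "bij_betw (\<lambda>i. N #> ts ! i) {0..<length ts} (rcosets N)"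
    and "finprod G ((!) ts) {0..<length ts} = \<one>"
proof -
  define m where "m = card (rcosets N)"
  have "N #> \<one> \<in> rcosets N" using subgroup.subset[OF assms(1)] one_closed by (rule rcosetsI)
  then have "m > 0" using assms(2) unfolding m_def card_gt_0_iff by blast
  obtain r where r: "r \<in> {0..<m} \<rightarrow> carrier G"
    and r_bij: "bij_betw (\<lambda>i. N #> r i) {0..<m} (rcosets N)"
    using obtain_rcoset_reps[OF assms(2)] unfolding m_def by blast
  define p where "p = finprod G r {0..<m}"
  have "p \<in> N" unfolding p_def using assms(1) _ r r_bij assms(3) by (rule finprod_rcoset_reps_mem) simp
  then have p: "p \<in> carrier G" "inv p \<in> N"
    using assms(1) by (auto intro: subgroup.mem_carrier subgroup.m_inv_closed)
  \<comment> \<open>Correcting one representative by the element \<open>inv p\<close> of \<open>N\<close> keeps its coset and makes the product trivial.\<close>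
  define e where "e i = (if i = 0 then inv p else \<one>)" for i :: nat
  define ts where "ts = map (\<lambda>i. r i \<otimes> e i) [0..<m]"
  have e: "e i \<in> N" for i
    unfolding e_def using p(2) subgroup.one_closed[OF assms(1)] by simp
  then have e_carrier: "e \<in> {0..<m} \<rightarrow> carrier G" using subgroup.mem_carrier[OF assms(1)] by blast
  have ts_nth: "ts ! i = r i \<otimes> e i" if "i < m" for i
    unfolding ts_def using that by simp
  show ?thesis
  proof
    show "length ts = card (rcosets N)" unfolding ts_def m_def by simp
    show "set ts \<subseteq> carrier G" unfolding ts_def using r e_carrier by auto
    have "N #> ts ! i = N #> r i" if "i \<in> {0..<m}" for i
    proof -
      have "r i \<in> carrier G" using r that by blast
      then show ?thesis using that by (simp add: ts_nth rcos_mult_mem[OF assms(1) e])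
    qed
    then have "bij_betw (\<lambda>i. N #> ts ! i) {0..<m} (rcosets N) = bij_betw (\<lambda>i. N #> r i) {0..<m} (rcosets N)"
      by (rule bij_betw_cong)
    then show "bij_betw (\<lambda>i. N #> ts ! i) {0..<length ts} (rcosets N)"
      using r_bij unfolding ts_def by simp
    have "finprod G e {0..<m} = inv p"
      using finprod_singleton_swap[of 0 "{0..<m}" "\<lambda>i. inv p"] \<open>m > 0\<close> p unfolding e_def by simp
    then have "finprod G (\<lambda>i. r i \<otimes> e i) {0..<m} = \<one>"
      using r e_carrier p unfolding p_def by (simp add: finprod_multf)
    moreover have "finprod G ((!) ts) {0..<m} = finprod G (\<lambda>i. r i \<otimes> e i) {0..<m}"
      using ts_nth by (intro finprod_cong') (use r e_carrier in auto)
    ultimately show "finprod G ((!) ts) {0..<length ts} = \<one>" by (simp add: ts_def)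
  qed
qed

lemma (in comm_group) bij_betw_coset_decomposition:
  assumes "subgroup N G" "listing_of ns N" "set ts \<subseteq> carrier G"
    and "bij_betw (\<lambda>i. N #> ts ! i) {0..<length ts} (rcosets N)"
  shows "bij_betw (\<lambda>(x, y). ts ! x \<otimes> ns ! y) ({0..<length ts} \<times> {0..<length ns}) (carrier G)"
proof -
  have ns: "distinct ns" "set ns = N" using assms(2) unfolding listing_of_def by auto
  have t_carrier: "ts ! x \<in> carrier G" if "x < length ts" for x
    using assms(3) nth_mem[OF that] by blast
  have n_mem: "ns ! y \<in> N" if "y < length ns" for y
    using ns(2) nth_mem[OF that] by blast
  have n_carrier: "ns ! y \<in> carrier G" if "y < length ns" for y
    using subgroup.mem_carrier[OF assms(1) n_mem[OF that]] .
  have inj: "x = x' \<and> y = y'"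
    if xy: "x < length ts" "y < length ns" "x' < length ts" "y' < length ns"
      and eq: "ts ! x \<otimes> ns ! y = ts ! x' \<otimes> ns ! y'" for x y x' y'
  proof -
    have "N #> ts ! x = N #> (ts ! x \<otimes> ns ! y)"
      using rcos_mult_mem[OF assms(1) n_mem[OF xy(2)] t_carrier[OF xy(1)]] by simp
    also have "\<dots> = N #> ts ! x'"
      using rcos_mult_mem[OF assms(1) n_mem[OF xy(4)] t_carrier[OF xy(3)]] by (simp only: eq)
    finally have "x = x'" using assms(4) xy unfolding bij_betw_def inj_on_def by simp
    with eq xy have "ns ! y = ns ! y'" using t_carrier n_carrier by simp
    with \<open>x = x'\<close> show ?thesis using ns(1) xy nth_eq_iff_index_eq by blast
  qed
  have surj: "\<exists>x < length ts. \<exists>y < length ns. g = ts ! x \<otimes> ns ! y" if g: "g \<in> carrier G" for g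
  proof -
    have "N #> g \<in> rcosets N" using subgroup.subset[OF assms(1)] g by (rule rcosetsI)
    then have "N #> g \<in> (\<lambda>i. N #> ts ! i) ` {0..<length ts}"
      using bij_betw_imp_surj_on[OF assms(4)] by simp
    then obtain x where x: "x < length ts" "N #> g = N #> ts ! x" by auto
    have "g \<in> N #> ts ! x" using rcos_self[OF g assms(1)] x(2) by simp
    then obtain n where n: "n \<in> N" "g = n \<otimes> ts ! x" unfolding r_coset_def by blast
    from n(1) ns(2) obtain y where y: "y < length ns" "n = ns ! y" by (auto simp: in_set_conv_nth)
    have "g = ts ! x \<otimes> ns ! y" using n(2) y t_carrier[OF x(1)] n_carrier[OF y(1)] by (simp add: m_comm)
    with x(1) y(1) show ?thesis by blast
  qed
  show ?thesis
    unfolding bij_betw_def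
  proof
    show "inj_on (\<lambda>(x, y). ts ! x \<otimes> ns ! y) ({0..<length ts} \<times> {0..<length ns})"
      using inj by (auto intro!: inj_onI)
    show "(\<lambda>(x, y). ts ! x \<otimes> ns ! y) ` ({0..<length ts} \<times> {0..<length ns}) = carrier G"
      using t_carrier n_carrier surj by fastforce
  qed
qed

locale coset_table = comm_group +
  fixes N :: "'a set" and ns ts :: "'a list" and k :: nat
  assumes N_subgroup: "subgroup N G"
    and ns_listing: "listing_of ns N"
    and length_ns: "length ns = k"
    and length_ts: "length ts = k"
    and ts_carrier: "set ts \<subseteq> carrier G"
    and ts_rcosets: "bij_betw (\<lambda>i. N #> ts ! i) {0..<k} (rcosets N)"
begin

abbreviation row :: "nat \<Rightarrow> 'a" where "row \<equiv> based_row G ns ts"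

abbreviation col :: "nat \<Rightarrow> 'a" where "col \<equiv> based_col G ns ts"

lemma ts_nth_carrier: "x < k \<Longrightarrow> ts ! x \<in> carrier G"
  using ts_carrier length_ts nth_mem by blast

lemma ns_nth_mem: "y < k \<Longrightarrow> ns ! y \<in> N"
  using ns_listing length_ns nth_mem unfolding listing_of_def by blast

lemma ns_nth_carrier: "y < k \<Longrightarrow> ns ! y \<in> carrier G"
  using subgroup.mem_carrier[OF N_subgroup ns_nth_mem] .

lemma k_pos: "0 < k"
proof -
  have "\<one> \<in> set ns" using ns_listing subgroup.one_closed[OF N_subgroup] unfolding listing_of_def by simp
  then show ?thesis using length_ns by (cases ns) auto
qed

lemma bij_betw_entry: "bij_betw (\<lambda>(x, y). ts ! x \<otimes> ns ! y) ({0..<k} \<times> {0..<k}) (carrier G)"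
  using bij_betw_coset_decomposition[OF N_subgroup ns_listing ts_carrier] ts_rcosets
  by (simp add: length_ns length_ts)

lemma card_carrier: "card (carrier G) = k ^ 2"
  using bij_betw_same_card[OF bij_betw_entry] by (simp add: power2_eq_square)

lemma bij_betw_row: "bij_betw row {0..<k ^ 2} (carrier G)"
proof -
  have "bij_betw ((\<lambda>(x, y). ts ! x \<otimes> ns ! y) \<circ> (\<lambda>r. (r mod k, r div k))) {0..<k * k} (carrier G)"
    using bij_betw_mod_div bij_betw_entry by (rule bij_betw_trans)
  moreover have "row = (\<lambda>(x, y). ts ! x \<otimes> ns ! y) \<circ> (\<lambda>r. (r mod k, r div k))"
    by (simp add: fun_eq_iff based_row_def length_ts)
  ultimately show ?thesis by (simp add: power2_eq_square)
qed

lemma bij_betw_col: "bij_betw col {0..<k ^ 2} (carrier G)"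
proof -
  have col_eq: "col r = ts ! (r div k) \<otimes> ns ! (r mod k)" if "r \<in> {0..<k * k}" for r
  proof -
    have "r div k < k" "r mod k < k" using that k_pos by (auto simp: less_mult_imp_div_less)
    then show ?thesis by (simp add: based_col_def length_ns m_comm ts_nth_carrier ns_nth_carrier)
  qed
  have "bij_betw ((\<lambda>(x, y). ts ! x \<otimes> ns ! y) \<circ> (\<lambda>r. (r div k, r mod k))) {0..<k * k} (carrier G)"
    using bij_betw_div_mod bij_betw_entry by (rule bij_betw_trans)
  then show ?thesis
    unfolding power2_eq_square by (rule bij_betw_cong[THEN iffD1, rotated]) (simp add: col_eq)
qed

lemma block_entry_eq:
  assumes "a < k" "b < k" "x < k" "y < k"
  shows "block_entry G row col k k a b x y = (ns ! a \<otimes> ts ! b) \<otimes> (ts ! x \<otimes> ns ! y)"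
proof -
  have "row (a * k + x) = ts ! x \<otimes> ns ! a" "col (b * k + y) = ns ! y \<otimes> ts ! b"
    using assms by (simp_all add: based_row_def based_col_def length_ns length_ts)
  then show ?thesis
    using assms by (simp add: block_entry_def m_ac ts_nth_carrier ns_nth_carrier)
qed

lemma cayley_sudoku: "cayley_sudoku G row col (k ^ 2) k k"
  unfolding cayley_sudoku_def cayley_table_def
proof (intro conjI allI impI)
  fix a b assume "a < k ^ 2 div k" "b < k ^ 2 div k"
  then have ab: "a < k" "b < k" by (simp_all add: power2_eq_square)
  define c where "c = ns ! a \<otimes> ts ! b"
  have c: "c \<in> carrier G" unfolding c_def using ab by (simp add: ts_nth_carrier ns_nth_carrier)
  have "bij_betw (\<lambda>z. c \<otimes> z) (carrier G) (carrier G)"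
    unfolding bij_betw_def using inj_on_cmult[OF c] surj_const_mult[OF c] by blast
  with bij_betw_entry have "bij_betw ((\<lambda>z. c \<otimes> z) \<circ> (\<lambda>(x, y). ts ! x \<otimes> ns ! y)) ({0..<k} \<times> {0..<k}) (carrier G)"
    by (rule bij_betw_trans)
  then show "bij_betw (\<lambda>(x, y). block_entry G row col k k a b x y) ({0..<k} \<times> {0..<k}) (carrier G)"
    by (rule bij_betw_cong[THEN iffD1, rotated]) (auto simp: block_entry_eq ab c_def)
qed (use card_carrier bij_betw_row bij_betw_col k_pos in auto)

lemma finprod_block_line:
  assumes "a < k" "b < k" "\<sigma> \<in> {0..<k} \<rightarrow> {0..<k}" "\<tau> \<in> {0..<k} \<rightarrow> {0..<k}"
  shows "finprod G (\<lambda>l. block_entry G row col k k a b (\<sigma> l) (\<tau> l)) {0..<k}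
    = (ns ! a \<otimes> ts ! b) [^] k \<otimes> (finprod G (\<lambda>l. ts ! \<sigma> l) {0..<k} \<otimes> finprod G (\<lambda>l. ns ! \<tau> l) {0..<k})"
proof -
  have \<sigma>\<tau>: "\<sigma> l < k" "\<tau> l < k" if "l \<in> {0..<k}" for l
    using assms(3,4) that by auto
  have "finprod G (\<lambda>l. block_entry G row col k k a b (\<sigma> l) (\<tau> l)) {0..<k}
      = finprod G (\<lambda>l. (ns ! a \<otimes> ts ! b) \<otimes> (ts ! \<sigma> l \<otimes> ns ! \<tau> l)) {0..<k}"
    using assms(1,2) \<sigma>\<tau> by (intro finprod_cong') (auto simp: block_entry_eq ts_nth_carrier ns_nth_carrier)
  also have "\<dots> = (ns ! a \<otimes> ts ! b) [^] k \<otimes> (finprod G (\<lambda>l. ts ! \<sigma> l) {0..<k} \<otimes> finprod G (\<lambda>l. ns ! \<tau> l) {0..<k})"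
    using assms(1,2) \<sigma>\<tau> by (subst finprod_mult_const) (auto simp: ts_nth_carrier ns_nth_carrier)
  finally show ?thesis .
qed

lemma left_coset_reps: "left_coset_reps G N ts"
proof -
  interpret normal N G using subgroup_imp_normal[OF N_subgroup] .
  have "lcosets N = rcosets N" unfolding LCOSETS_def RCOSETS_def using coset_eq by auto
  moreover have "ts ! i <# N = N #> ts ! i" if "i \<in> {0..<k}" for i
    using coset_eq ts_nth_carrier that by simp
  then have "bij_betw (\<lambda>i. ts ! i <# N) {0..<k} (rcosets N) = bij_betw (\<lambda>i. N #> ts ! i) {0..<k} (rcosets N)"
    by (rule bij_betw_cong)
  ultimately show ?thesis unfolding left_coset_reps_def using ts_carrier ts_rcosets length_ts by simp
qed

lemma pandiagonal_magic:
  assumes ts_prod: "finprod G ((!) ts) {0..<k} = \<one>"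
    and N_prod: "finprod G (\<lambda>x. x) N = \<one>"
    and pow_k: "\<And>x. x \<in> carrier G \<Longrightarrow> x [^] k = \<one>"
  shows "pandiagonal_magic G row col (k ^ 2) k"
proof -
  have ts_const: "finprod G (\<lambda>l. ts ! x) {0..<k} = \<one>" if "x < k" for x
    using that by (simp add: finprod_const pow_k ts_nth_carrier)
  have ns_const: "finprod G (\<lambda>l. ns ! y) {0..<k} = \<one>" if "y < k" for y
    using that by (simp add: finprod_const pow_k ns_nth_carrier)
  have ns_perm: "finprod G (\<lambda>l. ns ! \<sigma> l) {0..<k} = \<one>"
    if "inj_on \<sigma> {0..<k}" "\<sigma> \<in> {0..<k} \<rightarrow> {0..<k}" for \<sigma>
  proof -
    have "finprod G (\<lambda>l. ns ! \<sigma> l) {0..<k} = finprod G ((!) ns) {0..<k}"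
      using that by (intro finprod_reindex_endo) (auto simp: ns_nth_carrier image_subset_iff_funcset)
    also have "\<dots> = \<one>"
      using finprod_listing[OF ns_listing subgroup.subset[OF N_subgroup]] N_prod by (simp add: length_ns)
    finally show ?thesis .
  qed
  show ?thesis
    unfolding pandiagonal_magic_def
  proof (intro conjI allI impI cayley_sudoku)
    fix a b assume "a < k ^ 2 div k" "b < k ^ 2 div k"
    then have ab: "a < k" "b < k" by (simp_all add: power2_eq_square)
    have c: "(ns ! a \<otimes> ts ! b) [^] k = \<one>" using ab by (simp add: pow_k ts_nth_carrier ns_nth_carrier)
    note line = finprod_block_line[OF ab]
    have mod_k: "(\<lambda>l. f l mod k) \<in> {0..<k} \<rightarrow> {0..<k}" for f :: "nat \<Rightarrow> nat"
      using k_pos by simp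
    show "finprod G (\<lambda>y. block_entry G row col k k a b x y) {0..<k} = \<one>" if "x < k" for x
      using line[of "\<lambda>_. x" "\<lambda>l. l"] that c ts_const ns_perm[of "\<lambda>l. l"] by simp
    show "finprod G (\<lambda>x. block_entry G row col k k a b x y) {0..<k} = \<one>" if "y < k" for y
      using line[of "\<lambda>l. l" "\<lambda>_. y"] that c ts_prod ns_const by simp
    show "finprod G (\<lambda>l. block_entry G row col k k a b l ((l + j) mod k)) {0..<k} = \<one>" if "j < k" for j
      using line[of "\<lambda>l. l" "\<lambda>l. (l + j) mod k"] c ts_prod ns_perm[OF inj_on_add_mod mod_k] mod_k by simp
    show "finprod G (\<lambda>l. block_entry G row col k k a b l ((j + k - l) mod k)) {0..<k} = \<one>" if "j < k" for j
      using line[of "\<lambda>l. l" "\<lambda>l. (j + k - l) mod k"] c ts_prod ns_perm[OF inj_on_diff_mod[OF that] mod_k] mod_k by simp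
  qed
qed

end

theorem theorem4p1:
  fixes G :: "('a, 'b) monoid_scheme" and N :: "'a set" and k :: nat
  assumes "comm_group G"
    and "finite (carrier G)"
    and "0 < k"
    and "card (carrier G) = k ^ 2"
    and "grp_exp G dvd k"
    and "subgroup N G"
    and "card N = k"
    and "finprod G (\<lambda>x. x) N = \<one>\<^bsub>G\<^esub>"
    and "finprod (G Mod N) (\<lambda>C. C) (carrier (G Mod N)) = \<one>\<^bsub>G Mod N\<^esub>"
  shows "\<forall>ns. listing_of ns N \<longrightarrow>
           (\<exists>ts. length ts = k \<and> left_coset_reps G N ts \<and>
                 pandiagonal_magic G (based_row G ns ts) (based_col G ns ts) (k ^ 2) k)"
proof (intro allI impI)
  interpret comm_group G by (fact assms(1))
  fix ns assume ns: "listing_of ns N"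
  have "card (rcosets\<^bsub>G\<^esub> N) * k = k * k"
    using lagrange[OF assms(6)] assms(4,7) by (simp add: order_def power2_eq_square)
  then have index: "card (rcosets\<^bsub>G\<^esub> N) = k" using assms(3) by simp
  then have "finite (rcosets\<^bsub>G\<^esub> N)" using assms(3) by (intro card_ge_0_finite) simp
  then obtain ts where "length ts = card (rcosets\<^bsub>G\<^esub> N)" "set ts \<subseteq> carrier G"
    and "bij_betw (\<lambda>i. N #>\<^bsub>G\<^esub> ts ! i) {0..<length ts} (rcosets\<^bsub>G\<^esub> N)"
    and ts_prod: "finprod G ((!) ts) {0..<length ts} = \<one>\<^bsub>G\<^esub>"
    using obtain_rcoset_reps_finprod_one[OF assms(6) _ assms(9)] by blast
  moreover have "length ns = k" using ns assms(7) distinct_card unfolding listing_of_def by metis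
  ultimately interpret coset_table G N ns ts k
    using assms(6) ns index by (intro coset_table.intro coset_table_axioms.intro assms(1)) simp_all
  have "pandiagonal_magic G (based_row G ns ts) (based_col G ns ts) (k ^ 2) k"
    using pandiagonal_magic ts_prod assms(8) pow_eq_one_if_exp_dvd[OF assms(5)] by (simp add: length_ts)
  then show "\<exists>ts. length ts = k \<and> left_coset_reps G N ts \<and>
      pandiagonal_magic G (based_row G ns ts) (based_col G ns ts) (k ^ 2) k"
    using length_ts left_coset_reps by blast
qed

end
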